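(* Let $a>1$ and consider on $M_h$ with $2h=1$ the reduced oblate integrable system $(\ell_{34},G_{obl})$, where $G_{obl}=a\ell_{12}^2+\ell_{13}^2+\ell_{14}^2$. The critical values of the momentum map $(\ell_{34},G_{obl}):M_h\to\mathbb R^2$ are (the parts lying in the image of the momentum map of) the curves $\mathcal O_1: G_{obl}=(\sqrt a-\sqrt{a-1}\,|\ell_{34}|)^2$, $\mathcal O_2: G_{obl}=1-\ell_{34}^2$, and $\mathcal O_3: G_{obl}=0$.
   Context: $\mathbf L=(\ell_{12},\ell_{13},\ell_{14},\ell_{23},\ell_{24},\ell_{34})\in\mathbb R^6\cong\mathfrak{so}(4)^*$ with the Lie–Poisson bracket of $\mathfrak{so}(4)$ (extending $\ell_{ji}=-\ell_{ij}$: $\{\ell_{ij},\ell_{jk}\}=-\ell_{ik}$ for distinct $i,j,k$, and $\{\ell_{ij},\ell_{kl}\}=0$ when $\{i,j\}\cap\{k,l\}=\emptyset$). $M_h=\{\mathbf L:\sum_{i<j}\ell_{ij}^2=2h,\ \ell_{12}\ell_{34}-\ell_{13}\ell_{24}+\ell_{14}\ell_{23}=0\}\cong S^2\times S^2$ is a symplectic leaf. This system arises from separating the geodesic flow on $S^3$ in oblate coordinates (ellipsoidal parameters $(0,1,a,a)$). *)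

theory Defs
  imports "HOL-Analysis.Analysis"
begin

definition l12 :: "real^6 \<Rightarrow> real" where "l12 L = L$1"
definition l13 :: "real^6 \<Rightarrow> real" where "l13 L = L$2"
definition l14 :: "real^6 \<Rightarrow> real" where "l14 L = L$3"
definition l23 :: "real^6 \<Rightarrow> real" where "l23 L = L$4"
definition l24 :: "real^6 \<Rightarrow> real" where "l24 L = L$5"
definition l34 :: "real^6 \<Rightarrow> real" where "l34 L = L$6"

definition casimir1 :: "real^6 \<Rightarrow> real" where
  "casimir1 L = (l12 L)^2 + (l13 L)^2 + (l14 L)^2 + (l23 L)^2 + (l24 L)^2 + (l34 L)^2"

definition casimir2 :: "real^6 \<Rightarrow> real" where
  "casimir2 L = l12 L * l34 L - l13 L * l24 L + l14 L * l23 L"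

definition M_h :: "real \<Rightarrow> (real^6) set" where
  "M_h h = {L. casimir1 L = 2 * h \<and> casimir2 L = 0}"

definition G_obl :: "real \<Rightarrow> real^6 \<Rightarrow> real" where
  "G_obl a L = a * (l12 L)^2 + (l13 L)^2 + (l14 L)^2"

definition momentum :: "real \<Rightarrow> real^6 \<Rightarrow> real \<times> real" where
  "momentum a L = (l34 L, G_obl a L)"

text \<open>Tangent space of the leaf at L (as embedded submanifold cut out by the
  two Casimirs, whose differentials are independent on M_h for h > 0).\<close>
definition leaf_tangent :: "real^6 \<Rightarrow> (real^6) set" where
  "leaf_tangent L = {v. frechet_derivative casimir1 (at L) v = 0
                      \<and> frechet_derivative casimir2 (at L) v = 0}"

definition critical_point :: "real \<Rightarrow> real \<Rightarrow> real^6 \<Rightarrow> bool" where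
  "critical_point a h L \<longleftrightarrow> L \<in> M_h h \<and>
     \<not> (\<forall>p :: real \<times> real. \<exists>v \<in> leaf_tangent L.
          (frechet_derivative l34 (at L) v, frechet_derivative (G_obl a) (at L) v) = p)"

definition critical_values :: "real \<Rightarrow> real \<Rightarrow> (real \<times> real) set" where
  "critical_values a h = momentum a ` {L. critical_point a h L}"

end

theory Submission
  imports Defs
begin

text \<open>A point \<open>L\<close> of the leaf is critical for \<open>(l34, G_obl)\<close> iff a nontrivial combination
  \<open>\<alpha> d l34 + \<beta> d G_obl\<close> lies in the span of the differentials of the two Casimirs, which
  are independent on the leaf. In coordinates this is a small linear system in the multipliers.
  Eliminating them leaves four possibilities: the mixed coordinates \<open>l13, l14, l23, l24\<close> vanish,
  which forces \<open>l12 = 0\<close> (on \<open>O3\<close>) or \<open>l34 = 0\<close> (the vertex of \<open>O1\<close>);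
  \<open>l12 = l23 = l24 = 0\<close>, which gives \<open>O2\<close>; \<open>l12 = l13 = l14 = 0\<close>, which gives \<open>O3\<close>; or
  \<open>l13 l23 + l14 l24 = 0\<close> and \<open>a (l23\<^sup>2 + l24\<^sup>2 + l34\<^sup>2) = (a - 1) (l13\<^sup>2 + l14\<^sup>2 + l34\<^sup>2)\<close>.
  The last two equations are exactly the equality case of the bound
  \<open>G_obl \<le> (\<surd>a - \<surd>(a - 1) \<bar>l34\<bar>)\<^sup>2\<close>, whose defect is a sum of two nonnegative terms; so they
  describe \<open>O1\<close>. Conversely, over every point of the three curves in the image there is a point
  of the leaf with explicit multipliers.\<close>

lemma linear_not_surj_obtains_orthogonal:
  fixes F :: "'a::euclidean_space \<Rightarrow> 'b::euclidean_space"
  assumes "linear F" "\<not> surj F"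
  obtains w where "w \<noteq> 0" "\<And>v. w \<bullet> F v = 0"
proof -
  have "span (range F) = range F"
    using assms(1) by (simp add: span_eq_iff linear_subspace_image subspace_UNIV)
  moreover have "range F \<subset> UNIV"
    using assms(2) by auto
  ultimately have "span (range F) \<subset> span UNIV"
    by (metis span_UNIV)
  then show thesis
    using orthogonal_to_subspace_exists_gen that by (metis orthogonal_def rangeI span_base)
qed

lemma not_surj_on_common_kernel_iff_relation:
  fixes f1 f2 g1 g2 :: "'a::euclidean_space \<Rightarrow> real"
  assumes lin: "linear f1" "linear f2" "linear g1" "linear g2"
    and indep: "\<And>\<mu> \<nu>. (\<And>v. \<mu> * g1 v + \<nu> * g2 v = 0) \<Longrightarrow> \<mu> = 0 \<and> \<nu> = 0"
  shows "\<not> (\<forall>p. \<exists>v \<in> {v. g1 v = 0 \<and> g2 v = 0}. (f1 v, f2 v) = p) \<longleftrightarrow>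
    (\<exists>\<alpha> \<beta> \<mu> \<nu>. (\<alpha> \<noteq> 0 \<or> \<beta> \<noteq> 0) \<and> (\<forall>v. \<alpha> * f1 v + \<beta> * f2 v = \<mu> * g1 v + \<nu> * g2 v))"
proof
  assume "\<not> (\<forall>p. \<exists>v \<in> {v. g1 v = 0 \<and> g2 v = 0}. (f1 v, f2 v) = p)"
  then obtain p where p: "\<And>v. g1 v = 0 \<Longrightarrow> g2 v = 0 \<Longrightarrow> (f1 v, f2 v) \<noteq> p"
    by blast
  define F where "F v = (f1 v, f2 v, g1 v, g2 v)" for v
  have "linear F"
    using lin unfolding F_def linear_iff by (simp add: algebra_simps)
  moreover have "\<not> surj F"
  proof
    assume "surj F"
    then obtain v where "F v = (fst p, snd p, 0, 0)"
      by (metis surjD)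
    then show False
      using p[of v] unfolding F_def by auto
  qed
  ultimately obtain w where w: "w \<noteq> 0" "\<And>v. w \<bullet> F v = 0"
    using linear_not_surj_obtains_orthogonal by blast
  obtain w1 w2 w3 w4 where w_def: "w = (w1, w2, w3, w4)"
    by (cases w) auto
  have rel: "w1 * f1 v + w2 * f2 v = (- w3) * g1 v + (- w4) * g2 v" for v
    using w(2)[of v] unfolding w_def F_def by simp
  have "w1 \<noteq> 0 \<or> w2 \<noteq> 0"
  proof (rule ccontr)
    assume w12: "\<not> (w1 \<noteq> 0 \<or> w2 \<noteq> 0)"
    have "- w3 = 0 \<and> - w4 = 0"
      by (rule indep) (use rel w12 in simp)
    with w12 w(1) show False
      unfolding w_def by (simp add: zero_prod_def)
  qed
  with rel show "\<exists>\<alpha> \<beta> \<mu> \<nu>. (\<alpha> \<noteq> 0 \<or> \<beta> \<noteq> 0) \<and> (\<forall>v. \<alpha> * f1 v + \<beta> * f2 v = \<mu> * g1 v + \<nu> * g2 v)"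
    by blast
next
  assume "\<exists>\<alpha> \<beta> \<mu> \<nu>. (\<alpha> \<noteq> 0 \<or> \<beta> \<noteq> 0) \<and> (\<forall>v. \<alpha> * f1 v + \<beta> * f2 v = \<mu> * g1 v + \<nu> * g2 v)"
  then obtain \<alpha> \<beta> \<mu> \<nu> where nz: "\<alpha> \<noteq> 0 \<or> \<beta> \<noteq> 0"
    and rel: "\<And>v. \<alpha> * f1 v + \<beta> * f2 v = \<mu> * g1 v + \<nu> * g2 v"
    by blast
  show "\<not> (\<forall>p. \<exists>v \<in> {v. g1 v = 0 \<and> g2 v = 0}. (f1 v, f2 v) = p)"
  proof
    assume "\<forall>p. \<exists>v \<in> {v. g1 v = 0 \<and> g2 v = 0}. (f1 v, f2 v) = p"
    then obtain v where "g1 v = 0" "g2 v = 0" "f1 v = \<alpha>" "f2 v = \<beta>"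
      by fastforce
    then have "\<alpha>\<^sup>2 + \<beta>\<^sup>2 = 0"
      using rel[of v] by (simp add: power2_eq_square)
    with nz show False
      by simp
  qed
qed

lemmas coordinate_defs = l12_def l13_def l14_def l23_def l24_def l34_def

lemma has_derivative_coordinates:
  "(l12 has_derivative l12) F" "(l13 has_derivative l13) F" "(l14 has_derivative l14) F"
  "(l23 has_derivative l23) F" "(l24 has_derivative l24) F" "(l34 has_derivative l34) F"
  by (simp_all add: coordinate_defs[abs_def] bounded_linear_imp_has_derivative bounded_linear_vec_nth)

lemma has_derivative_G_obl:
  "(G_obl a has_derivative
     (\<lambda>v. 2 * a * l12 L * l12 v + 2 * l13 L * l13 v + 2 * l14 L * l14 v)) (at L)"
  unfolding G_obl_def[abs_def] by (auto intro!: derivative_eq_intros has_derivative_coordinates)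

lemma has_derivative_casimir1:
  "(casimir1 has_derivative
     (\<lambda>v. 2 * (l12 L * l12 v + l13 L * l13 v + l14 L * l14 v
              + l23 L * l23 v + l24 L * l24 v + l34 L * l34 v))) (at L)"
  unfolding casimir1_def[abs_def] by (auto intro!: derivative_eq_intros has_derivative_coordinates)

lemma has_derivative_casimir2:
  "(casimir2 has_derivative
     (\<lambda>v. l12 L * l34 v + l34 L * l12 v - l13 L * l24 v - l24 L * l13 v
          + l14 L * l23 v + l23 L * l14 v)) (at L)"
  unfolding casimir2_def[abs_def] by (auto intro!: derivative_eq_intros has_derivative_coordinates)

lemmas frechet_derivative_eqs =
  has_derivative_coordinates(6)[THEN frechet_derivative_at, symmetric]
  has_derivative_G_obl[THEN frechet_derivative_at, symmetric]
  has_derivative_casimir1[THEN frechet_derivative_at, symmetric]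
  has_derivative_casimir2[THEN frechet_derivative_at, symmetric]

lemma casimir_differentials_independent:
  assumes "L \<in> M_h h" "h > 0"
    and rel: "\<And>v. \<mu> * frechet_derivative casimir1 (at L) v + \<nu> * frechet_derivative casimir2 (at L) v = 0"
  shows "\<mu> = 0 \<and> \<nu> = 0"
proof -
  have rel': "\<mu> * (2 * (l12 L * l12 v + l13 L * l13 v + l14 L * l14 v
                         + l23 L * l23 v + l24 L * l24 v + l34 L * l34 v))
      + \<nu> * (l12 L * l34 v + l34 L * l12 v - l13 L * l24 v - l24 L * l13 v
              + l14 L * l23 v + l23 L * l14 v) = 0" for v
    using rel[of v] by (simp add: frechet_derivative_eqs)
  have casimirs: "casimir1 L = 2 * h" "casimir2 L = 0"
    using assms(1) by (simp_all add: M_h_def)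
  have "\<mu> * (4 * h) = 0"
    using rel'[of L] casimirs unfolding casimir1_def casimir2_def by algebra
  then have \<mu>: "\<mu> = 0"
    using assms(2) by simp
  have "\<nu> * l34 L = 0" "\<nu> * l24 L = 0" "\<nu> * l23 L = 0" "\<nu> * l14 L = 0" "\<nu> * l13 L = 0" "\<nu> * l12 L = 0"
    using rel'[of "axis 1 1"] rel'[of "axis 2 1"] rel'[of "axis 3 1"] rel'[of "axis 4 1"]
      rel'[of "axis 5 1"] rel'[of "axis 6 1"]
    by (simp_all add: \<mu> coordinate_defs axis_def)
  then have "\<nu>\<^sup>2 * casimir1 L = 0"
    unfolding casimir1_def by algebra
  then show ?thesis
    using assms(2) casimirs \<mu> by simp
qed

text \<open>The coordinates of \<open>\<alpha> d l34 + \<beta> d G_obl = (\<mu>/2) d casimir1 + \<nu> d casimir2\<close> at \<open>L\<close>.\<close>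

definition lagrange_relation :: "real \<Rightarrow> real^6 \<Rightarrow> real \<Rightarrow> real \<Rightarrow> real \<Rightarrow> real \<Rightarrow> bool" where
  "lagrange_relation a L \<alpha> \<beta> \<mu> \<nu> \<longleftrightarrow>
     2 * a * \<beta> * l12 L = \<mu> * l12 L + \<nu> * l34 L \<and>
     2 * \<beta> * l13 L = \<mu> * l13 L - \<nu> * l24 L \<and>
     2 * \<beta> * l14 L = \<mu> * l14 L + \<nu> * l23 L \<and>
     0 = \<mu> * l23 L + \<nu> * l14 L \<and>
     0 = \<mu> * l24 L - \<nu> * l13 L \<and>
     \<alpha> = \<mu> * l34 L + \<nu> * l12 L"

lemma differential_relation_iff_lagrange_relation:
  "(\<forall>v. \<alpha> * frechet_derivative l34 (at L) v + \<beta> * frechet_derivative (G_obl a) (at L) v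
       = \<mu> * frechet_derivative casimir1 (at L) v + \<nu> * frechet_derivative casimir2 (at L) v)
   \<longleftrightarrow> lagrange_relation a L \<alpha> \<beta> (2 * \<mu>) \<nu>"
  (is "(\<forall>v. ?rel v) \<longleftrightarrow> _")
proof -
  have rel_iff: "?rel v \<longleftrightarrow>
      \<alpha> * l34 v + \<beta> * (2 * a * l12 L * l12 v + 2 * l13 L * l13 v + 2 * l14 L * l14 v)
      = \<mu> * (2 * (l12 L * l12 v + l13 L * l13 v + l14 L * l14 v
                 + l23 L * l23 v + l24 L * l24 v + l34 L * l34 v))
        + \<nu> * (l12 L * l34 v + l34 L * l12 v - l13 L * l24 v - l24 L * l13 v
              + l14 L * l23 v + l23 L * l14 v)"
    (is "_ \<longleftrightarrow> ?explicit v") for v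
    by (simp add: frechet_derivative_eqs)
  show ?thesis
  proof
    assume "\<forall>v. ?rel v"
    then have "?explicit (axis i 1)" for i
      using rel_iff by blast
    from this[of 1] this[of 2] this[of 3] this[of 4] this[of 5] this[of 6]
    show "lagrange_relation a L \<alpha> \<beta> (2 * \<mu>) \<nu>"
      unfolding lagrange_relation_def by (simp add: coordinate_defs axis_def algebra_simps)
  next
    assume "lagrange_relation a L \<alpha> \<beta> (2 * \<mu>) \<nu>"
    then have "?explicit v" for v
      unfolding lagrange_relation_def by algebra
    then show "\<forall>v. ?rel v"
      using rel_iff by blast
  qed
qed

lemma critical_point_iff_lagrange_relation:
  assumes "h > 0"
  shows "critical_point a h L \<longleftrightarrow>
    L \<in> M_h h \<and> (\<exists>\<alpha> \<beta> \<mu> \<nu>. (\<alpha> \<noteq> 0 \<or> \<beta> \<noteq> 0) \<and> lagrange_relation a L \<alpha> \<beta> \<mu> \<nu>)"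
proof (cases "L \<in> M_h h")
  case True
  have linear: "linear (frechet_derivative l34 (at L))" "linear (frechet_derivative (G_obl a) (at L))"
    "linear (frechet_derivative casimir1 (at L))" "linear (frechet_derivative casimir2 (at L))"
    by (intro linear_frechet_derivative differentiableI,
        rule has_derivative_coordinates has_derivative_G_obl has_derivative_casimir1 has_derivative_casimir2)+
  have "critical_point a h L \<longleftrightarrow>
      (\<exists>\<alpha> \<beta> \<mu> \<nu>. (\<alpha> \<noteq> 0 \<or> \<beta> \<noteq> 0) \<and> lagrange_relation a L \<alpha> \<beta> (2 * \<mu>) \<nu>)"
    unfolding critical_point_def leaf_tangent_def differential_relation_iff_lagrange_relation[symmetric]
    using not_surj_on_common_kernel_iff_relation[OF linear casimir_differentials_independent[OF True assms]]
    by (simp add: True)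
  also have "\<dots> \<longleftrightarrow> (\<exists>\<alpha> \<beta> \<mu> \<nu>. (\<alpha> \<noteq> 0 \<or> \<beta> \<noteq> 0) \<and> lagrange_relation a L \<alpha> \<beta> \<mu> \<nu>)"
    by (metis field_sum_of_halves mult_2)
  finally show ?thesis
    using True by simp
qed (simp add: critical_point_def)

definition critical_curves :: "real \<Rightarrow> (real \<times> real) set" where
  "critical_curves a = {(x, y). y = (sqrt a - sqrt (a - 1) * \<bar>x\<bar>)\<^sup>2 \<or> y = 1 - x\<^sup>2 \<or> y = 0}"

lemma M_h_half_iff:
  "L \<in> M_h (1/2) \<longleftrightarrow>
     (l12 L)\<^sup>2 + (l13 L)\<^sup>2 + (l14 L)\<^sup>2 + (l23 L)\<^sup>2 + (l24 L)\<^sup>2 + (l34 L)\<^sup>2 = 1 \<and>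
     l12 L * l34 L - l13 L * l24 L + l14 L * l23 L = 0"
  by (simp add: M_h_def casimir1_def casimir2_def)

lemma leaf_product_identity:
  assumes "L \<in> M_h (1/2)"
  shows "((l23 L)\<^sup>2 + (l24 L)\<^sup>2 + (l34 L)\<^sup>2) * ((l13 L)\<^sup>2 + (l14 L)\<^sup>2 + (l34 L)\<^sup>2)
    = (l34 L)\<^sup>2 + (l13 L * l23 L + l14 L * l24 L)\<^sup>2"
  using assms unfolding M_h_half_iff by algebra

text \<open>Both terms on the right are nonnegative, so \<open>O1\<close> bounds the image of the momentum map
  from above.\<close>

lemma O1_gap_identity:
  fixes a :: real
  assumes "a > 1" "L \<in> M_h (1/2)"
  defines "S \<equiv> sqrt ((l23 L)\<^sup>2 + (l24 L)\<^sup>2 + (l34 L)\<^sup>2)"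
    and "m \<equiv> sqrt ((l13 L)\<^sup>2 + (l14 L)\<^sup>2 + (l34 L)\<^sup>2)"
  shows "(sqrt a - sqrt (a - 1) * \<bar>l34 L\<bar>)\<^sup>2 - G_obl a L
    = (sqrt a * S - sqrt (a - 1) * m)\<^sup>2 + 2 * sqrt a * sqrt (a - 1) * (S * m - \<bar>l34 L\<bar>)"
proof -
  have "(sqrt a)\<^sup>2 = a" "(sqrt (a - 1))\<^sup>2 = a - 1" "\<bar>l34 L\<bar>\<^sup>2 = (l34 L)\<^sup>2"
    "S\<^sup>2 = (l23 L)\<^sup>2 + (l24 L)\<^sup>2 + (l34 L)\<^sup>2" "m\<^sup>2 = (l13 L)\<^sup>2 + (l14 L)\<^sup>2 + (l34 L)\<^sup>2"
    using assms(1) by (simp_all add: S_def m_def)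
  with assms(2) show ?thesis
    unfolding M_h_half_iff G_obl_def by algebra
qed

lemma G_obl_eq_O1_iff:
  fixes a :: real
  assumes "a > 1" "L \<in> M_h (1/2)"
  shows "G_obl a L = (sqrt a - sqrt (a - 1) * \<bar>l34 L\<bar>)\<^sup>2 \<longleftrightarrow>
    l13 L * l23 L + l14 L * l24 L = 0 \<and>
    a * ((l23 L)\<^sup>2 + (l24 L)\<^sup>2 + (l34 L)\<^sup>2) = (a - 1) * ((l13 L)\<^sup>2 + (l14 L)\<^sup>2 + (l34 L)\<^sup>2)"
    (is "_ \<longleftrightarrow> ?P \<and> ?Q")
proof -
  define S where "S = sqrt ((l23 L)\<^sup>2 + (l24 L)\<^sup>2 + (l34 L)\<^sup>2)"
  define m where "m = sqrt ((l13 L)\<^sup>2 + (l14 L)\<^sup>2 + (l34 L)\<^sup>2)"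
  have Sm: "S * m = sqrt ((l34 L)\<^sup>2 + (l13 L * l23 L + l14 L * l24 L)\<^sup>2)"
    unfolding S_def m_def real_sqrt_mult[symmetric] leaf_product_identity[OF assms(2)] ..
  have abs_sqrt: "\<bar>l34 L\<bar> = sqrt ((l34 L)\<^sup>2)"
    by simp
  have "\<bar>l34 L\<bar> \<le> S * m"
    unfolding Sm by (intro real_le_rsqrt) simp
  moreover have "sqrt a * sqrt (a - 1) > 0"
    using assms(1) by simp
  ultimately have "2 * sqrt a * sqrt (a - 1) * (S * m - \<bar>l34 L\<bar>) \<ge> 0"
    by simp
  moreover have "(sqrt a - sqrt (a - 1) * \<bar>l34 L\<bar>)\<^sup>2 - G_obl a L
      = (sqrt a * S - sqrt (a - 1) * m)\<^sup>2 + 2 * sqrt a * sqrt (a - 1) * (S * m - \<bar>l34 L\<bar>)"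
    unfolding S_def m_def by (rule O1_gap_identity[OF assms])
  ultimately have "G_obl a L = (sqrt a - sqrt (a - 1) * \<bar>l34 L\<bar>)\<^sup>2 \<longleftrightarrow>
      (sqrt a * S - sqrt (a - 1) * m)\<^sup>2 = 0 \<and> 2 * sqrt a * sqrt (a - 1) * (S * m - \<bar>l34 L\<bar>) = 0"
    by (smt (verit) zero_le_power2)
  also have "\<dots> \<longleftrightarrow> sqrt a * S = sqrt (a - 1) * m \<and> S * m = \<bar>l34 L\<bar>"
    using assms(1) by simp
  finally have "G_obl a L = (sqrt a - sqrt (a - 1) * \<bar>l34 L\<bar>)\<^sup>2 \<longleftrightarrow>
      sqrt a * S = sqrt (a - 1) * m \<and> S * m = \<bar>l34 L\<bar>" .
  moreover have "sqrt a * S = sqrt (a - 1) * m \<longleftrightarrow> ?Q"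
    using assms(1) by (simp add: S_def m_def real_sqrt_mult[symmetric])
  moreover have "S * m = \<bar>l34 L\<bar> \<longleftrightarrow> ?P"
    unfolding Sm abs_sqrt real_sqrt_eq_iff by simp
  ultimately show ?thesis
    by blast
qed

lemma momentum_in_critical_curves_if_mixed_zero:
  assumes "a > 1" "L \<in> M_h (1/2)"
    and "l13 L = 0" "l14 L = 0" "l23 L = 0" "l24 L = 0"
  shows "momentum a L \<in> critical_curves a"
proof -
  have "l12 L * l34 L = 0"
    using assms(2-) unfolding M_h_half_iff by simp
  then consider "l12 L = 0" | "l34 L = 0"
    by auto
  then show ?thesis
  proof cases
    case 1
    then show ?thesis
      using assms(3-) by (simp add: momentum_def G_obl_def critical_curves_def)
  next
    case 2
    then have "(l12 L)\<^sup>2 = 1"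
      using assms(2-) unfolding M_h_half_iff by simp
    then show ?thesis
      using assms(1,3-) 2 by (simp add: momentum_def G_obl_def critical_curves_def)
  qed
qed

lemma lagrange_relation_beta_zero_imp_mixed_zero:
  assumes "lagrange_relation a L \<alpha> 0 \<mu> \<nu>" "\<alpha> \<noteq> 0"
  shows "l13 L = 0 \<and> l14 L = 0 \<and> l23 L = 0 \<and> l24 L = 0"
proof -
  have "\<mu>\<^sup>2 \<noteq> \<nu>\<^sup>2"
  proof
    assume "\<mu>\<^sup>2 = \<nu>\<^sup>2"
    then have "\<mu> = \<nu> \<or> \<mu> = - \<nu>"
      by (simp add: power2_eq_iff)
    with assms show False
      unfolding lagrange_relation_def by (auto simp: algebra_simps)
  qed
  moreover have "(\<mu>\<^sup>2 - \<nu>\<^sup>2) * l13 L = 0" "(\<mu>\<^sup>2 - \<nu>\<^sup>2) * l14 L = 0"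
    "(\<mu>\<^sup>2 - \<nu>\<^sup>2) * l23 L = 0" "(\<mu>\<^sup>2 - \<nu>\<^sup>2) * l24 L = 0"
    using assms(1) unfolding lagrange_relation_def by algebra+
  ultimately show ?thesis
    by simp
qed

lemma lagrange_relation_generic_imp_O1_conditions:
  assumes "L \<in> M_h (1/2)" "lagrange_relation a L \<alpha> 1 m n"
    and "2 * m - m\<^sup>2 + n\<^sup>2 = 0" "n \<noteq> 0"
  shows "l13 L * l23 L + l14 L * l24 L = 0 \<and>
    a * ((l23 L)\<^sup>2 + (l24 L)\<^sup>2 + (l34 L)\<^sup>2) = (a - 1) * ((l13 L)\<^sup>2 + (l14 L)\<^sup>2 + (l34 L)\<^sup>2)"
proof -
  note rel = assms(2)[unfolded lagrange_relation_def mult_1_right]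
  note leaf = assms(1)[unfolded M_h_half_iff]
  let ?X = "(l13 L)\<^sup>2 + (l14 L)\<^sup>2"
  have "m \<noteq> 0"
    using assms(3,4) by auto
  have P: "m * (l13 L * l23 L + l14 L * l24 L) = 0"
    using rel by algebra
  have "m * l12 L * l34 L = n * ?X"
    using rel leaf by algebra
  then have "n * ((2 * a - m) * ?X - m * (l34 L)\<^sup>2) = 0"
    using rel by algebra
  then have X: "(2 * a - m) * ?X = m * (l34 L)\<^sup>2"
    using assms(4) by simp
  have "m * (m * ((l23 L)\<^sup>2 + (l24 L)\<^sup>2) - (m - 2) * ?X) = 0"
    using rel assms(3) by algebra
  then have Y: "m * ((l23 L)\<^sup>2 + (l24 L)\<^sup>2) = (m - 2) * ?X"
    using \<open>m \<noteq> 0\<close> by simp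
  have Q: "m * (a * ((l23 L)\<^sup>2 + (l24 L)\<^sup>2 + (l34 L)\<^sup>2) - (a - 1) * (?X + (l34 L)\<^sup>2)) = 0"
    using X Y by algebra
  from P Q \<open>m \<noteq> 0\<close> show ?thesis
    by simp
qed

lemma lagrange_relation_normalized_imp_critical_curves:
  assumes "a > 1" "L \<in> M_h (1/2)" "lagrange_relation a L \<alpha> 1 m n"
  shows "momentum a L \<in> critical_curves a"
proof -
  note rel = assms(3)[unfolded lagrange_relation_def mult_1_right]
  define D where "D = 2 * m - m\<^sup>2 + n\<^sup>2"
  \<comment> \<open>\<open>D\<close> is the determinant of both 2x2 systems, in \<open>(l13, l24)\<close> and in \<open>(l14, l23)\<close>\<close>
  have "D * l13 L = 0" "D * l14 L = 0" "D * l23 L = 0" "D * l24 L = 0"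
    unfolding D_def using rel by algebra+
  consider "D \<noteq> 0" | "D = 0" "n = 0" "m = 0" | "D = 0" "n = 0" "m = 2" | "D = 0" "n \<noteq> 0"
    unfolding D_def by (cases "D = 0"; cases "n = 0") (auto simp: power2_eq_square algebra_simps)
  then show ?thesis
  proof cases
    case 1
    with \<open>D * l13 L = 0\<close> \<open>D * l14 L = 0\<close> \<open>D * l23 L = 0\<close> \<open>D * l24 L = 0\<close> show ?thesis
      by (intro momentum_in_critical_curves_if_mixed_zero assms(1,2)) simp_all
  next
    case 2
    then show ?thesis
      using rel assms(1) by (simp add: momentum_def G_obl_def critical_curves_def)
  next
    case 3
    then have "l12 L = 0" "l23 L = 0" "l24 L = 0"
      using rel assms(1) by auto
    then show ?thesis
      using assms(2) unfolding M_h_half_iff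
      by (simp add: momentum_def G_obl_def critical_curves_def algebra_simps)
  next
    case 4
    then show ?thesis
      using lagrange_relation_generic_imp_O1_conditions[OF assms(2,3)] G_obl_eq_O1_iff[OF assms(1,2)]
      by (simp add: D_def momentum_def critical_curves_def)
  qed
qed

lemma critical_point_imp_momentum_in_critical_curves:
  assumes "a > 1" "critical_point a (1/2) L"
  shows "momentum a L \<in> critical_curves a"
proof -
  obtain \<alpha> \<beta> \<mu> \<nu> where L: "L \<in> M_h (1/2)" and nz: "\<alpha> \<noteq> 0 \<or> \<beta> \<noteq> 0"
    and rel: "lagrange_relation a L \<alpha> \<beta> \<mu> \<nu>"
    using assms(2) critical_point_iff_lagrange_relation[of "1/2"] by auto
  show ?thesis
  proof (cases "\<beta> = 0")
    case True
    with rel nz have "l13 L = 0 \<and> l14 L = 0 \<and> l23 L = 0 \<and> l24 L = 0"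
      using lagrange_relation_beta_zero_imp_mixed_zero by simp
    then show ?thesis
      using momentum_in_critical_curves_if_mixed_zero[OF assms(1) L] by simp
  next
    case False
    with rel have "lagrange_relation a L (\<alpha> / \<beta>) 1 (\<mu> / \<beta>) (\<nu> / \<beta>)"
      unfolding lagrange_relation_def by (simp add: field_simps)
    then show ?thesis
      by (rule lagrange_relation_normalized_imp_critical_curves[OF assms(1) L])
  qed
qed

lemma critical_point_if_G_obl_eq_O1:
  assumes "a > 1" "L \<in> M_h (1/2)" "G_obl a L = (sqrt a - sqrt (a - 1) * \<bar>l34 L\<bar>)\<^sup>2"
  shows "critical_point a (1/2) L"
proof -
  define N where "N = (l13 L)\<^sup>2 + (l14 L)\<^sup>2 + (l34 L)\<^sup>2"
  have P: "l13 L * l23 L + l14 L * l24 L = 0"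
    and Q: "a * ((l23 L)\<^sup>2 + (l24 L)\<^sup>2 + (l34 L)\<^sup>2) = (a - 1) * N"
    using assms(3) unfolding G_obl_eq_O1_iff[OF assms(1,2)] N_def by simp_all
  have C2: "l12 L * l34 L - l13 L * l24 L + l14 L * l23 L = 0"
    using assms(2) unfolding M_h_half_iff by simp
  have "\<exists>\<alpha> \<beta> \<mu> \<nu>. (\<alpha> \<noteq> 0 \<or> \<beta> \<noteq> 0) \<and> lagrange_relation a L \<alpha> \<beta> \<mu> \<nu>"
  proof (cases "N = 0")
    case True
    then have "(l13 L)\<^sup>2 = 0" "(l14 L)\<^sup>2 = 0" "(l34 L)\<^sup>2 = 0"
      unfolding N_def
      using zero_le_power2[of "l13 L"] zero_le_power2[of "l14 L"] zero_le_power2[of "l34 L"]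
      by linarith+
    moreover from this have "l23 L = 0" "l24 L = 0"
      using Q assms(1) True by (simp_all add: sum_power2_eq_zero_iff)
    ultimately have "lagrange_relation a L 0 1 (2 * a) 0"
      unfolding lagrange_relation_def by simp
    then show ?thesis
      by fastforce
  next
    case False
    \<comment> \<open>the multipliers found in the generic case of the normalized relation, scaled by \<open>N\<close>\<close>
    have "lagrange_relation a L (2 * a * ((l13 L)\<^sup>2 + (l14 L)\<^sup>2 + (l12 L)\<^sup>2) * l34 L) N
        (2 * a * ((l13 L)\<^sup>2 + (l14 L)\<^sup>2)) (2 * a * l12 L * l34 L)"
      unfolding lagrange_relation_def N_def
      by (intro conjI) (algebra | use P Q[unfolded N_def] C2 in algebra)+
    with False show ?thesis
      by blast
  qed
  with assms(2) show ?thesis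
    using critical_point_iff_lagrange_relation[of "1/2"] by simp
qed

lemma critical_point_if_G_obl_zero:
  assumes "a > 0" "h > 0" "L \<in> M_h h" "G_obl a L = 0"
  shows "critical_point a h L"
proof -
  have "0 \<le> a * (l12 L)\<^sup>2" "0 \<le> (l13 L)\<^sup>2" "0 \<le> (l14 L)\<^sup>2"
    using assms(1) by simp_all
  then have "a * (l12 L)\<^sup>2 = 0" "(l13 L)\<^sup>2 = 0" "(l14 L)\<^sup>2 = 0"
    using assms(4) unfolding G_obl_def by linarith+
  then have "l12 L = 0" "l13 L = 0" "l14 L = 0"
    using assms(1) by simp_all
  then have "lagrange_relation a L 0 1 0 0"
    unfolding lagrange_relation_def by simp
  with assms(3) show ?thesis
    unfolding critical_point_iff_lagrange_relation[OF assms(2)] by fastforce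
qed

lemma parabola_point_critical_value:
  assumes "h > 0" "x\<^sup>2 \<le> 2 * h"
  shows "(x, 2 * h - x\<^sup>2) \<in> critical_values a h"
proof -
  define L :: "real^6" where "L = (\<chi> i. if i = 2 then sqrt (2 * h - x\<^sup>2) else if i = 6 then x else 0)"
  have coordinates: "l12 L = 0" "l13 L = sqrt (2 * h - x\<^sup>2)" "l14 L = 0" "l23 L = 0" "l24 L = 0" "l34 L = x"
    unfolding L_def coordinate_defs by simp_all
  then have "L \<in> M_h h"
    using assms(2) by (simp add: M_h_def casimir1_def casimir2_def)
  moreover have "lagrange_relation a L (2 * x) 1 2 0"
    unfolding lagrange_relation_def coordinates by simp
  ultimately have "critical_point a h L"
    unfolding critical_point_iff_lagrange_relation[OF assms(1)] by fastforce
  moreover have "momentum a L = (x, 2 * h - x\<^sup>2)"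
    using assms(2) by (simp add: momentum_def G_obl_def coordinates)
  ultimately show ?thesis
    unfolding critical_values_def by (metis image_eqI mem_Collect_eq)
qed

lemma momentum_in_critical_curves_imp_critical_value:
  assumes "a > 1" "L \<in> M_h (1/2)" "momentum a L \<in> critical_curves a"
  shows "momentum a L \<in> critical_values a (1/2)"
proof -
  consider "G_obl a L = (sqrt a - sqrt (a - 1) * \<bar>l34 L\<bar>)\<^sup>2"
    | "G_obl a L = 1 - (l34 L)\<^sup>2" | "G_obl a L = 0"
    using assms(3) by (auto simp: momentum_def critical_curves_def)
  then show ?thesis
  proof cases
    case 1
    then have "critical_point a (1/2) L"
      by (rule critical_point_if_G_obl_eq_O1[OF assms(1,2)])
    then show ?thesis
      unfolding critical_values_def by blast
  next
    case 2
    have "(l34 L)\<^sup>2 \<le> 1"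
      using assms(2) zero_le_power2[of "l12 L"] zero_le_power2[of "l13 L"] zero_le_power2[of "l14 L"]
        zero_le_power2[of "l23 L"] zero_le_power2[of "l24 L"]
      unfolding M_h_half_iff by linarith
    then have "(l34 L, 2 * (1/2) - (l34 L)\<^sup>2) \<in> critical_values a (1/2)"
      by (intro parabola_point_critical_value) simp_all
    with 2 show ?thesis
      by (simp add: momentum_def)
  next
    case 3
    then have "critical_point a (1/2) L"
      using assms(1,2) by (intro critical_point_if_G_obl_zero) simp_all
    then show ?thesis
      unfolding critical_values_def by blast
  qed
qed

theorem proposition5:
  fixes a :: real
  assumes "a > 1"
  shows "critical_values a (1/2) =
           momentum a ` M_h (1/2) \<inter>
           {(x, y). y = (sqrt a - sqrt (a - 1) * \<bar>x\<bar>)^2 \<or> y = 1 - x^2 \<or> y = 0}"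
proof -
  have "critical_values a (1/2) = momentum a ` M_h (1/2) \<inter> critical_curves a"
  proof (intro equalityI subsetI)
    fix z
    assume "z \<in> critical_values a (1/2)"
    then obtain L where "critical_point a (1/2) L" "z = momentum a L"
      unfolding critical_values_def by blast
    then show "z \<in> momentum a ` M_h (1/2) \<inter> critical_curves a"
      using critical_point_imp_momentum_in_critical_curves[OF assms]
      by (auto simp: critical_point_def)
  next
    fix z
    assume "z \<in> momentum a ` M_h (1/2) \<inter> critical_curves a"
    then obtain L where "L \<in> M_h (1/2)" "z = momentum a L" "momentum a L \<in> critical_curves a"
      by blast
    then show "z \<in> critical_values a (1/2)"
      using momentum_in_critical_curves_imp_critical_value[OF assms] by simp
  qed
  then show ?thesis
    unfolding critical_curves_def .
qed
end
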